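(* Let $A\in\mathbb{R}^{n\times n}$ be an adequate matrix that is group invertible. Then $A$ is a $P_{\#}$-matrix.
   Context: $R(A)$, $N(A)$ denote the range and null space of $A$. $A$ is group invertible if there is $X$ with $AXA=A$, $XAX=X$, $AX=XA$; equivalently $R(A)\cap N(A)=\{0\}$ (i.e. $\operatorname{rank}A=\operatorname{rank}A^2$). $A$ is called adequate if (1) all principal minors of $A$ are nonnegative, and (2) for every principal minor that vanishes, the associated rows of $A$ are linearly dependent and the associated columns of $A$ are linearly dependent. A matrix $A$ is a $P_{\#}$-matrix if: $x\in R(A)$ and $x_i(Ax)_i\le 0$ for all $i$ imply $x=0$. *)

theory Defs
  imports "HOL-Analysis.Analysis"
begin

text \<open>Principal minor of A associated with the index set S (Leibniz formula of the
  principal submatrix A[S,S]); the empty minor is 1.\<close>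
definition principal_minor :: "real^'n^'n \<Rightarrow> 'n set \<Rightarrow> real" where
  "principal_minor A S =
     (\<Sum>p\<in>{p. p permutes S}. of_int (sign p) * (\<Prod>i\<in>S. A $ i $ p i))"

text \<open>The rows of A indexed by S (as a family, i.e. counted with multiplicity) are linearly dependent.\<close>
definition rows_dependent :: "real^'n^'n \<Rightarrow> 'n set \<Rightarrow> bool" where
  "rows_dependent A S \<longleftrightarrow>
     (\<exists>c::'n \<Rightarrow> real. (\<exists>i\<in>S. c i \<noteq> 0) \<and> (\<Sum>i\<in>S. c i *\<^sub>R row i A) = 0)"

definition cols_dependent :: "real^'n^'n \<Rightarrow> 'n set \<Rightarrow> bool" where
  "cols_dependent A S \<longleftrightarrow>
     (\<exists>c::'n \<Rightarrow> real. (\<exists>j\<in>S. c j \<noteq> 0) \<and> (\<Sum>j\<in>S. c j *\<^sub>R column j A) = 0)"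

definition adequate :: "real^'n^'n \<Rightarrow> bool" where
  "adequate A \<longleftrightarrow>
     (\<forall>S. S \<noteq> {} \<longrightarrow> principal_minor A S \<ge> 0) \<and>
     (\<forall>S. S \<noteq> {} \<longrightarrow> principal_minor A S = 0 \<longrightarrow> rows_dependent A S \<and> cols_dependent A S)"

definition group_invertible :: "real^'n^'n \<Rightarrow> bool" where
  "group_invertible A \<longleftrightarrow> (\<exists>X. A ** X ** A = A \<and> X ** A ** X = X \<and> A ** X = X ** A)"

definition P_sharp_matrix :: "real^'n^'n \<Rightarrow> bool" where
  "P_sharp_matrix A \<longleftrightarrow>
     (\<forall>x. x \<in> range (\<lambda>y. A *v y) \<and> (\<forall>i. x $ i * (A *v x) $ i \<le> 0) \<longrightarrow> x = 0)"

end

theory Submission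
  imports Defs
begin

text \<open>With \<open>S\<close> the support of \<open>x\<close>
  and \<open>D\<close> the nonnegative diagonal matrix \<open>d\<^sub>i = -(A x)\<^sub>i / x\<^sub>i\<close>, the vector \<open>x\<close>
  lies in the kernel of \<open>(A + D)[S,S]\<close>. Principal minors of a matrix with nonnegative
  principal minors can only grow when a nonnegative diagonal is added, so \<open>det A[S,S] = 0\<close>.
  Adequacy then yields a kernel vector \<open>w\<close> of \<open>A\<close> supported in \<open>S\<close>; subtracting a suitable
  multiple of \<open>w\<close> from \<open>x\<close> shrinks the support without changing \<open>A x\<close> or the sign
  condition. By induction on the support, \<open>A x = 0\<close>, and group invertibility
  (\<open>R(A) \<inter> N(A) = {0}\<close>) gives \<open>x = 0\<close>.\<close>

definition principal_block :: "real^'n^'n \<Rightarrow> 'n set \<Rightarrow> real^'n^'n" where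
  "principal_block A S = (\<chi> i j. if i \<in> S \<and> j \<in> S then A$i$j else if i = j then 1 else 0)"

definition diag_matrix :: "('n \<Rightarrow> real) \<Rightarrow> real^'n^'n" where
  "diag_matrix d = (\<chi> i j. if i = j then d i else 0)"

lemma diag_matrix_mult_vec [simp]: "(diag_matrix d *v x) $ i = d i * x $ i"
  by (simp add: diag_matrix_def matrix_vector_mult_def mult_delta_left)

lemma principal_minor_eq_det:
  fixes A :: "real^'n^'n"
  shows "principal_minor A S = det (principal_block A S)"
proof -
  let ?term = "\<lambda>p. of_int (sign p) * (\<Prod>i\<in>UNIV. principal_block A S $ i $ p i)"
  have "principal_minor A S = sum ?term {p. p permutes UNIV}"
    unfolding principal_minor_def
  proof (rule sum.mono_neutral_cong_left)
    show "{p. p permutes S} \<subseteq> {p. p permutes UNIV}"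
      using permutes_subset by blast
    show "\<forall>p\<in>{p. p permutes UNIV} - {p. p permutes S}. ?term p = 0"
    proof
      fix p assume "p \<in> {p. p permutes UNIV} - {p. p permutes S}"
      then obtain i where "i \<notin> S" "p i \<noteq> i"
        unfolding permutes_def by auto
      then have "(\<Prod>i\<in>UNIV. principal_block A S $ i $ p i) = 0"
        by (intro prod_zero) (auto simp: principal_block_def)
      then show "?term p = 0" by simp
    qed
    show "of_int (sign p) * (\<Prod>i\<in>S. A $ i $ p i) = ?term p" if "p \<in> {p. p permutes S}" for p
    proof -
      from that have p: "p permutes S" by simp
      have "(\<Prod>i\<in>UNIV. principal_block A S $ i $ p i) = (\<Prod>i\<in>S. principal_block A S $ i $ p i)"
        by (rule prod.mono_neutral_right) (use p in \<open>auto simp: principal_block_def permutes_not_in\<close>)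
      also have "\<dots> = (\<Prod>i\<in>S. A $ i $ p i)"
        by (rule prod.cong) (use p in \<open>auto simp: principal_block_def permutes_in_image\<close>)
      finally show ?thesis by simp
    qed
  qed simp
  then show ?thesis unfolding det_def .
qed

lemma principal_minor_empty [simp]:
  fixes A :: "real^'n^'n"
  shows "principal_minor A {} = 1"
proof -
  have "principal_block A {} = mat 1"
    by (simp add: principal_block_def mat_def vec_eq_iff)
  then show ?thesis by (simp add: principal_minor_eq_det)
qed

lemma adequate_principal_minor_nonneg:
  fixes A :: "real^'n^'n"
  assumes "adequate A"
  shows "principal_minor A S \<ge> 0"
  using assms by (cases "S = {}") (auto simp: adequate_def)

lemma principal_block_mult_vec:
  fixes A :: "real^'n^'n"
  assumes "\<forall>i. x$i \<noteq> 0 \<longrightarrow> i \<in> S"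
  shows "(principal_block A S *v x) $ i = (if i \<in> S then (A *v x) $ i else x $ i)"
proof (cases "i \<in> S")
  case True
  then show ?thesis
    unfolding matrix_vector_mult_def
    by (simp, intro sum.cong) (use assms in \<open>auto simp: principal_block_def\<close>)
next
  case False
  then show ?thesis
    by (simp add: principal_block_def matrix_vector_mult_def mult_delta_left)
qed

lemma principal_minor_eq_0_if_kernel:
  fixes A :: "real^'n^'n"
  assumes supp: "\<forall>i. x$i \<noteq> 0 \<longrightarrow> i \<in> S" and ker: "\<forall>i\<in>S. (A *v x)$i = 0" and "x \<noteq> 0"
  shows "principal_minor A S = 0"
proof -
  have "principal_block A S *v x = 0"
    using supp ker by (auto simp: vec_eq_iff principal_block_mult_vec[OF supp])
  with \<open>x \<noteq> 0\<close> have "\<not> invertible (principal_block A S)"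
    using matrix_left_invertible_ker invertible_left_inverse by blast
  then show ?thesis by (simp add: principal_minor_eq_det invertible_det_nz)
qed

lemma det_principal_block_unit_row:
  fixes A :: "real^'n^'n"
  assumes "k \<in> S"
  shows "det (\<chi> i. if i = k then axis k 1 else row i (principal_block A S))
    = det (principal_block A (S - {k}))"
  unfolding det_def
proof (rule sum.cong[OF refl])
  fix p assume "p \<in> {p. p permutes (UNIV::'n set)}"
  then have p: "p permutes (UNIV::'n set)" by simp
  let ?M = "\<chi> i. if i = k then axis k 1 else row i (principal_block A S)"
  have "(\<Prod>i\<in>UNIV. ?M $ i $ p i) = (\<Prod>i\<in>UNIV. principal_block A (S - {k}) $ i $ p i)"
  proof (cases "p k = k")
    case True
    show ?thesis
    proof (rule prod.cong[OF refl])
      fix i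
      show "?M $ i $ p i = principal_block A (S - {k}) $ i $ p i"
      proof (cases "i = k")
        case True
        then show ?thesis using \<open>p k = k\<close> by (simp add: principal_block_def axis_def)
      next
        case False
        then have "p i \<noteq> k" using \<open>p k = k\<close> injD[OF permutes_inj[OF p]] by metis
        then show ?thesis using False by (simp add: principal_block_def row_def)
      qed
    qed
  next
    case False
    have "(\<Prod>i\<in>UNIV. ?M $ i $ p i) = 0"
      by (intro prod_zero bexI[of _ k]) (use False in \<open>simp_all add: axis_def\<close>)
    moreover have "(\<Prod>i\<in>UNIV. principal_block A (S - {k}) $ i $ p i) = 0"
      by (intro prod_zero bexI[of _ k]) (use False in \<open>simp_all add: principal_block_def\<close>)
    ultimately show ?thesis by (simp only:)
  qed
  then show "of_int (sign p) * (\<Prod>i\<in>UNIV. ?M $ i $ p i)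
    = of_int (sign p) * (\<Prod>i\<in>UNIV. principal_block A (S - {k}) $ i $ p i)" by simp
qed

text \<open>Adding \<open>c\<close> to a single diagonal entry is linear in row \<open>k\<close>; the added row \<open>c e\<^sub>k\<close>
  contributes \<open>c\<close> times the complementary principal minor.\<close>

lemma principal_minor_add_diag_single:
  fixes A :: "real^'n^'n"
  assumes "k \<in> S"
  shows "principal_minor (A + diag_matrix ((\<lambda>_. 0)(k := c))) S
    = principal_minor A S + c * principal_minor A (S - {k})"
proof -
  let ?M = "principal_block A S"
  have block: "principal_block (A + diag_matrix ((\<lambda>_. 0)(k := c))) S
      = (\<chi> i. if i = k then row k ?M + c *s axis k 1 else row i ?M)"
    using assms by (auto simp: vec_eq_iff principal_block_def diag_matrix_def row_def axis_def)
  have "det (\<chi> i. if i = k then row k ?M + c *s axis k 1 else row i ?M)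
      = det (\<chi> i. if i = k then row k ?M else row i ?M)
        + det (\<chi> i. if i = k then c *s axis k 1 else row i ?M)"
    by (rule det_row_add)
  also have "(\<chi> i. if i = k then row k ?M else row i ?M) = ?M"
    by (simp add: vec_eq_iff row_def)
  also have "det (\<chi> i. if i = k then c *s axis k 1 else row i ?M)
      = c * det (\<chi> i. if i = k then axis k 1 else row i ?M)"
    by (rule det_row_mul)
  also have "det (\<chi> i. if i = k then axis k 1 else row i ?M) = det (principal_block A (S - {k}))"
    using assms by (rule det_principal_block_unit_row)
  finally show ?thesis
    unfolding principal_minor_eq_det block .
qed

lemma principal_minor_add_diag_single_outside:
  fixes A :: "real^'n^'n"
  assumes "k \<notin> S"
  shows "principal_minor (A + diag_matrix ((\<lambda>_. 0)(k := c))) S = principal_minor A S"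
proof -
  have "principal_block (A + diag_matrix ((\<lambda>_. 0)(k := c))) S = principal_block A S"
    using assms by (auto simp: vec_eq_iff principal_block_def diag_matrix_def)
  then show ?thesis by (simp add: principal_minor_eq_det)
qed

lemma principal_minor_mono_add_diag:
  fixes A :: "real^'n^'n"
  assumes P0: "\<And>T. principal_minor A T \<ge> 0" and d: "\<And>i. d i \<ge> 0"
  shows "principal_minor A S \<le> principal_minor (A + diag_matrix d) S"
proof -
  have mono: "principal_minor A S \<le> principal_minor (A + diag_matrix d) S"
    if "finite K" "\<forall>i. i \<notin> K \<longrightarrow> d i = 0" "\<forall>i. d i \<ge> 0" for K and d :: "'n \<Rightarrow> real" and S
    using that
  proof (induction K arbitrary: d S rule: finite_induct)
    case empty
    then have "diag_matrix d = 0" by (simp add: diag_matrix_def vec_eq_iff)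
    then show ?case by simp
  next
    case (insert k K)
    define d' where "d' = d(k := 0)"
    have IH: "principal_minor A T \<le> principal_minor (A + diag_matrix d') T" for T
      using insert.prems by (intro insert.IH) (auto simp: d'_def)
    have split: "A + diag_matrix d = (A + diag_matrix d') + diag_matrix ((\<lambda>_. 0)(k := d k))"
      by (auto simp: vec_eq_iff diag_matrix_def d'_def)
    show ?case
    proof (cases "k \<in> S")
      case True
      have "principal_minor A S + d k * principal_minor A (S - {k})
          \<le> principal_minor (A + diag_matrix d') S + d k * principal_minor (A + diag_matrix d') (S - {k})"
        using IH insert.prems(2) by (intro add_mono mult_left_mono) auto
      moreover have "0 \<le> d k * principal_minor A (S - {k})"
        using P0 insert.prems(2) by simp
      ultimately show ?thesis
        unfolding split principal_minor_add_diag_single[OF True] by linarith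
    next
      case False
      then show ?thesis
        using IH unfolding split principal_minor_add_diag_single_outside[OF False] by simp
    qed
  qed
  show ?thesis using d by (intro mono[of UNIV]) simp_all
qed

text \<open>The diagonal \<open>d\<^sub>i = -(A x)\<^sub>i / x\<^sub>i\<close> (zero off the support, since \<open>t / 0 = 0\<close>)
  puts \<open>x\<close> into the kernel of \<open>(A + D)[S,S]\<close>.\<close>

lemma principal_minor_support_eq_0:
  fixes A :: "real^'n^'n"
  assumes P0: "\<And>T. principal_minor A T \<ge> 0"
    and sign: "\<forall>i. x$i * (A *v x)$i \<le> 0" and "x \<noteq> 0"
  shows "principal_minor A {i. x$i \<noteq> 0} = 0"
proof -
  define d where "d i = - (A *v x)$i / x$i" for i
  have d_nonneg: "d i \<ge> 0" for i
  proof -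
    have "d i = - (x$i * (A *v x)$i) / (x$i)\<^sup>2"
      by (cases "x$i = 0") (simp_all add: d_def power2_eq_square)
    then show ?thesis using sign[rule_format, of i] by (simp add: divide_nonpos_nonneg)
  qed
  have "((A + diag_matrix d) *v x)$i = 0" if "x$i \<noteq> 0" for i
    using that by (simp add: d_def matrix_vector_mult_add_rdistrib)
  then have "principal_minor (A + diag_matrix d) {i. x$i \<noteq> 0} = 0"
    using \<open>x \<noteq> 0\<close> by (intro principal_minor_eq_0_if_kernel) auto
  moreover have "principal_minor A {i. x$i \<noteq> 0} \<le> principal_minor (A + diag_matrix d) {i. x$i \<noteq> 0}"
    using P0 d_nonneg by (rule principal_minor_mono_add_diag)
  ultimately show ?thesis using P0[of "{i. x$i \<noteq> 0}"] by linarith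
qed

lemma cols_dependent_imp_kernel_vector:
  fixes A :: "real^'n^'n"
  assumes "cols_dependent A S"
  obtains w where "A *v w = 0" "w \<noteq> 0" "\<forall>i. w$i \<noteq> 0 \<longrightarrow> i \<in> S"
proof -
  obtain c where c: "\<exists>j\<in>S. c j \<noteq> 0" "(\<Sum>j\<in>S. c j *\<^sub>R column j A) = 0"
    using assms unfolding cols_dependent_def by blast
  define w where "w = (\<chi> j. if j \<in> S then c j else 0)"
  have "A *v w = (\<Sum>j\<in>S. c j *\<^sub>R column j A)"
    by (simp add: matrix_mult_sum w_def scalar_mult_eq_scaleR if_distrib[where f="\<lambda>a. a *\<^sub>R _"]
        sum.If_cases cong: if_cong)
  moreover have "w \<noteq> 0" using c(1) by (auto simp: w_def vec_eq_iff)
  ultimately show ?thesis using that c(2) by (simp add: w_def)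
qed

text \<open>Ratio test: \<open>t = x\<^sub>k / w\<^sub>k\<close> with \<open>\<bar>x\<^sub>k / w\<^sub>k\<bar>\<close> minimal over the support of \<open>w\<close>
  kills coordinate \<open>k\<close> and makes every factor \<open>1 - t w\<^sub>i / x\<^sub>i\<close> nonnegative.\<close>

lemma ratio_test:
  fixes x w :: "real^'n"
  assumes supp: "\<forall>i. w$i \<noteq> 0 \<longrightarrow> x$i \<noteq> 0" and "w \<noteq> 0"
  obtains t where "\<forall>i. \<exists>l\<ge>0. (x - t *s w)$i = l * x$i"
    and "{i. (x - t *s w)$i \<noteq> 0} \<subset> {i. x$i \<noteq> 0}"
proof -
  define J where "J = {j. w$j \<noteq> 0}"
  have "J \<noteq> {}" using \<open>w \<noteq> 0\<close> by (auto simp: J_def vec_eq_iff)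
  define m where "m = Min ((\<lambda>j. \<bar>x$j / w$j\<bar>) ` J)"
  have "m \<in> (\<lambda>j. \<bar>x$j / w$j\<bar>) ` J"
    unfolding m_def using \<open>J \<noteq> {}\<close> by (intro Min_in) auto
  then obtain k where "k \<in> J" and m_k: "m = \<bar>x$k / w$k\<bar>" by blast
  have m_le: "m \<le> \<bar>x$j / w$j\<bar>" if "j \<in> J" for j
    unfolding m_def using that by simp
  define t where "t = x$k / w$k"
  have rescaled: "\<exists>l\<ge>0. (x - t *s w)$i = l * x$i" for i
  proof (cases "x$i = 0")
    case True
    then show ?thesis using supp by auto
  next
    case False
    have "\<bar>t * (w$i / x$i)\<bar> \<le> 1"
    proof (cases "i \<in> J")
      case True
      have "\<bar>t\<bar> \<le> \<bar>x$i / w$i\<bar>"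
        using m_le[OF True] m_k by (simp add: t_def)
      then have "\<bar>t\<bar> * \<bar>w$i / x$i\<bar> \<le> \<bar>x$i / w$i\<bar> * \<bar>w$i / x$i\<bar>"
        by (rule mult_right_mono) simp
      also have "\<dots> = 1" using False True by (simp add: J_def abs_mult[symmetric] mult.commute)
      finally show ?thesis by (simp add: abs_mult)
    qed (simp add: J_def)
    then have "1 - t * (w$i / x$i) \<ge> 0" by linarith
    moreover have "(x - t *s w)$i = (1 - t * (w$i / x$i)) * x$i"
      using False by (simp add: field_simps)
    ultimately show ?thesis by blast
  qed
  moreover have "{i. (x - t *s w)$i \<noteq> 0} \<subset> {i. x$i \<noteq> 0}"
  proof
    show "{i. (x - t *s w)$i \<noteq> 0} \<subseteq> {i. x$i \<noteq> 0}"
    proof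
      fix i assume "i \<in> {i. (x - t *s w)$i \<noteq> 0}"
      with rescaled[of i] show "i \<in> {i. x$i \<noteq> 0}" by auto
    qed
    have "(x - t *s w)$k = 0" "x$k \<noteq> 0"
      using \<open>k \<in> J\<close> supp by (auto simp: t_def J_def)
    then show "{i. (x - t *s w)$i \<noteq> 0} \<noteq> {i. x$i \<noteq> 0}" by blast
  qed
  ultimately show ?thesis using that by blast
qed

lemma sign_reversal_imp_kernel:
  fixes A :: "real^'n^'n"
  assumes P0: "\<And>T. principal_minor A T \<ge> 0"
    and cols: "\<And>S. S \<noteq> {} \<Longrightarrow> principal_minor A S = 0 \<Longrightarrow> cols_dependent A S"
  shows "\<forall>i. x$i * (A *v x)$i \<le> 0 \<Longrightarrow> A *v x = 0"
proof (induction "card {i. x$i \<noteq> 0}" arbitrary: x rule: less_induct)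
  case less
  show ?case
  proof (cases "x = 0")
    case True
    then show ?thesis by simp
  next
    case False
    define S where "S = {i. x$i \<noteq> 0}"
    have "principal_minor A S = 0"
      unfolding S_def using P0 less.prems False by (rule principal_minor_support_eq_0)
    moreover have "S \<noteq> {}" using False by (auto simp: S_def vec_eq_iff)
    ultimately have "cols_dependent A S" by (rule cols[rotated])
    then obtain w where w: "A *v w = 0" "w \<noteq> 0" "\<forall>i. w$i \<noteq> 0 \<longrightarrow> x$i \<noteq> 0"
      by (rule cols_dependent_imp_kernel_vector) (auto simp: S_def)
    obtain t where t: "\<forall>i. \<exists>l\<ge>0. (x - t *s w)$i = l * x$i"
      and smaller: "{i. (x - t *s w)$i \<noteq> 0} \<subset> {i. x$i \<noteq> 0}"
      using w(3,2) by (rule ratio_test)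
    have same_image: "A *v (x - t *s w) = A *v x"
      using w(1) by (simp add: matrix_vector_mult_diff_distrib vector_scalar_commute)
    have "(x - t *s w)$i * (A *v (x - t *s w))$i \<le> 0" for i
    proof -
      obtain l where "l \<ge> 0" "(x - t *s w)$i = l * x$i" using t by blast
      then show ?thesis
        using less.prems by (simp add: same_image mult.assoc mult_nonneg_nonpos)
    qed
    moreover have "card {i. (x - t *s w)$i \<noteq> 0} < card {i. x$i \<noteq> 0}"
      using smaller by (simp add: psubset_card_mono)
    ultimately have "A *v (x - t *s w) = 0" using less.hyps by blast
    then show ?thesis by (simp add: same_image)
  qed
qed

lemma group_invertible_range_kernel_eq_0:
  fixes A :: "real^'n^'n"
  assumes "group_invertible A" and "x \<in> range ((*v) A)" and "A *v x = 0"
  shows "x = 0"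
proof -
  obtain y where y: "x = A *v y" using assms(2) by blast
  obtain X where X: "A ** X ** A = A" "A ** X = X ** A"
    using assms(1) unfolding group_invertible_def by blast
  have "x = (A ** X ** A) *v y" using X(1) y by simp
  also have "\<dots> = (X ** (A ** A)) *v y"
    using X(2) by (simp add: matrix_mul_assoc)
  also have "\<dots> = X *v (A *v x)" by (simp add: y matrix_vector_mul_assoc)
  finally show "x = 0" using assms(3) by simp
qed

theorem mainTheorem3:
  fixes A :: "real^'n^'n"
  assumes "adequate A" and "group_invertible A"
  shows "P_sharp_matrix A"
  unfolding P_sharp_matrix_def
proof (intro allI impI)
  fix x assume x: "x \<in> range ((*v) A) \<and> (\<forall>i. x$i * (A *v x)$i \<le> 0)"
  have "A *v x = 0"
  proof (rule sign_reversal_imp_kernel)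
    show "principal_minor A T \<ge> 0" for T
      using assms(1) by (rule adequate_principal_minor_nonneg)
    show "cols_dependent A S" if "S \<noteq> {}" "principal_minor A S = 0" for S
      using assms(1) that by (simp add: adequate_def)
  qed (use x in simp)
  with x show "x = 0" using group_invertible_range_kernel_eq_0[OF assms(2)] by simp
qed

end
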